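(* Every bounded complex spectral family $E$ in a complete lattice $\mathbb{L}$ is decomposable, i.e. there are spectral families $E^1,E^2$ in $\mathbb{L}$ such that $E_{\lambda,\mu}=E^1_\lambda\wedge E^2_\mu$ for all $\lambda,\mu\in\mathbb{R}$.
   Context: $\mathbb{L}$ has least element $0$ and greatest element $1$. A (real) spectral family is a map $F:\mathbb{R}\to\mathbb{L}$ with $F_\lambda\le F_\mu$ for $\lambda\le\mu$, $F_\lambda=\bigwedge_{\mu>\lambda}F_\mu$, $\bigwedge_\lambda F_\lambda=0$, $\bigvee_\lambda F_\lambda=1$. A complex spectral family is a map $E:\mathbb{R}^2\to\mathbb{L}$ with (i) $E_{\lambda_1,\lambda_2}\wedge E_{\mu_1,\mu_2}=E_{\min\{\lambda_1,\mu_1\},\min\{\lambda_2,\mu_2\}}$; (ii) $\bigwedge_{\lambda_1<\mu_1,\lambda_2<\mu_2}E_{\mu_1,\mu_2}=E_{\lambda_1,\lambda_2}$; (iii) $\bigwedge_\lambda E_{\lambda,\lambda_2}=0=\bigwedge_\lambda E_{\lambda_1,\lambda}$ for all $\lambda_1,\lambda_2$, and $\bigvee_{\lambda_1,\lambda_2}E_{\lambda_1,\lambda_2}=1$. It is bounded if there are $m,b\in\mathbb{R}$ with $E_{\lambda_1,\lambda_2}=0$ whenever $\lambda_1\le m$ or $\lambda_2\le m$, and $E_{\lambda_1,\lambda_2}=1$ whenever $\lambda_1,\lambda_2\ge b$. *)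

theory Defs
  imports Main "HOL.Real"
begin

definition spectral_family :: "(real \<Rightarrow> 'a::complete_lattice) \<Rightarrow> bool" where
  "spectral_family F \<longleftrightarrow>
     (\<forall>l m. l \<le> m \<longrightarrow> F l \<le> F m) \<and>
     (\<forall>l. F l = (INF m\<in>{l<..}. F m)) \<and>
     (INF l. F l) = bot \<and>
     (SUP l. F l) = top"

definition complex_spectral_family :: "(real \<Rightarrow> real \<Rightarrow> 'a::complete_lattice) \<Rightarrow> bool" where
  "complex_spectral_family E \<longleftrightarrow>
     (\<forall>l1 l2 m1 m2. inf (E l1 l2) (E m1 m2) = E (min l1 m1) (min l2 m2)) \<and>
     (\<forall>l1 l2. Inf {E m1 m2 | m1 m2. l1 < m1 \<and> l2 < m2} = E l1 l2) \<and>
     (\<forall>l2. (INF l. E l l2) = bot) \<and>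
     (\<forall>l1. (INF l. E l1 l) = bot) \<and>
     Sup {E l1 l2 | l1 l2. True} = top"

definition bounded_complex_spectral_family :: "(real \<Rightarrow> real \<Rightarrow> 'a::complete_lattice) \<Rightarrow> bool" where
  "bounded_complex_spectral_family E \<longleftrightarrow>
     complex_spectral_family E \<and>
     (\<exists>c b. (\<forall>l1 l2. l1 \<le> c \<or> l2 \<le> c \<longrightarrow> E l1 l2 = bot) \<and>
            (\<forall>l1 l2. l1 \<ge> b \<and> l2 \<ge> b \<longrightarrow> E l1 l2 = top))"

end

theory Submission
  imports Defs
begin

text \<open>Choose \<open>b\<close> beyond the upper bound, so that \<open>E b b = top\<close>. Then the meet rule gives
  \<open>E l m = inf (E l m) (E b b) = E (min l b) (min m b) = inf (E l b) (E b m)\<close>, and the two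
  sections \<open>l \<mapsto> E l b\<close> and \<open>m \<mapsto> E b m\<close> are real spectral families: monotonicity and
  right continuity in one variable follow from the joint ones, and \<open>E b b = top\<close>
  supplies the supremum.\<close>

lemma complex_spectral_family_inf:
  assumes "complex_spectral_family E"
  shows "inf (E l1 l2) (E m1 m2) = E (min l1 m1) (min l2 m2)"
  using assms unfolding complex_spectral_family_def by blast

lemma complex_spectral_family_mono:
  assumes "complex_spectral_family E" "l1 \<le> m1" "l2 \<le> m2"
  shows "E l1 l2 \<le> E m1 m2"
  using complex_spectral_family_inf[OF assms(1), of l1 l2 m1 m2] assms(2,3)
  by (simp add: le_iff_inf)

lemma complex_spectral_family_swap:
  assumes "complex_spectral_family E"
  shows "complex_spectral_family (\<lambda>x y. E y x)"
proof -
  have "{E m2 m1 | m1 m2. l1 < m1 \<and> l2 < m2} = {E m1 m2 | m1 m2. l2 < m1 \<and> l1 < m2}"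
    for l1 l2 by blast
  moreover have "{E l2 l1 | l1 l2. True} = {E l1 l2 | l1 l2. True}" by blast
  ultimately show ?thesis
    using assms unfolding complex_spectral_family_def by simp
qed

lemma complex_spectral_family_right_continuous:
  assumes E: "complex_spectral_family E"
  shows "E l y = (INF m\<in>{l<..}. E m y)"
proof (rule antisym)
  show "E l y \<le> (INF m\<in>{l<..}. E m y)"
    by (rule INF_greatest) (simp add: complex_spectral_family_mono[OF E])
  have "(INF m\<in>{l<..}. E m y) \<le> E m1 m2" if "l < m1" "y < m2" for m1 m2
    using that INF_lower[of m1 "{l<..}" "\<lambda>m. E m y"]
      complex_spectral_family_mono[OF E, of m1 m1 y m2]
    by (auto intro: order_trans)
  then have "(INF m\<in>{l<..}. E m y) \<le> Inf {E m1 m2 | m1 m2. l < m1 \<and> y < m2}"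
    by (auto intro: Inf_greatest)
  also have "\<dots> = E l y"
    using E unfolding complex_spectral_family_def by blast
  finally show "(INF m\<in>{l<..}. E m y) \<le> E l y" .
qed

lemma spectral_family_section:
  assumes E: "complex_spectral_family E" and "(SUP l. E l y) = top"
  shows "spectral_family (\<lambda>l. E l y)"
  unfolding spectral_family_def
proof (intro conjI allI impI)
  show "E l y \<le> E m y" if "l \<le> m" for l m
    using complex_spectral_family_mono[OF E that] by simp
  show "E l y = (INF m\<in>{l<..}. E m y)" for l
    by (rule complex_spectral_family_right_continuous[OF E])
  show "(INF l. E l y) = bot"
    using E unfolding complex_spectral_family_def by blast
  show "(SUP l. E l y) = top" by fact
qed

lemma complex_spectral_family_eq_inf_sections:
  assumes E: "complex_spectral_family E" and "E b b = top"
  shows "E l m = inf (E l b) (E b m)"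
proof -
  have "E l m = inf (E l m) (E b b)" using \<open>E b b = top\<close> by simp
  also have "\<dots> = E (min l b) (min b m)"
    by (simp add: complex_spectral_family_inf[OF E] min.commute)
  also have "\<dots> = inf (E l b) (E b m)"
    by (simp add: complex_spectral_family_inf[OF E])
  finally show ?thesis .
qed

theorem proposition2p20:
  fixes E :: "real \<Rightarrow> real \<Rightarrow> 'a::complete_lattice"
  assumes "bounded_complex_spectral_family E"
  shows "\<exists>E1 E2 :: real \<Rightarrow> 'a. spectral_family E1 \<and> spectral_family E2 \<and>
           (\<forall>l m. E l m = inf (E1 l) (E2 m))"
proof -
  have E: "complex_spectral_family E"
    using assms unfolding bounded_complex_spectral_family_def by blast
  obtain b where top: "E b b = top"
    using assms unfolding bounded_complex_spectral_family_def by blast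
  have "(SUP l. E l b) = top" "(SUP m. E b m) = top"
    using SUP_upper[of b UNIV "\<lambda>l. E l b"] SUP_upper[of b UNIV "\<lambda>m. E b m"] top
    by (simp_all add: top_unique)
  then have "spectral_family (\<lambda>l. E l b)" "spectral_family (\<lambda>m. E b m)"
    using spectral_family_section[OF E] spectral_family_section[OF complex_spectral_family_swap[OF E]]
    by simp_all
  then show ?thesis
    using complex_spectral_family_eq_inf_sections[OF E top] by blast
qed

end
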